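(* Let $r\ge1$ be an integer. Let $(p,l)$ be an irregular pair with $\Delta_{(p,l)}\neq0$, and let $(p,l_r)\in\Psi^{\rm irr}_r$ be the (unique) irregular pair of order $r$ corresponding to $(p,l)$, with associated pair $(p,s_1,\ldots,s_r)\in\widehat{\Psi}^{\rm irr}_r$. For even $m\ge2$ put $Q(m)=\operatorname{num}\!\left(\frac{B_m}{m}\right)\Big/\operatorname{num}\!\left(\frac{B_m}{m(m-1)}\right)$ and define \[ A(p^r)=\min_{k\in\mathbb{N}_0}\left\{\, m=l_r+k\varphi(p^r) \;:\; Q(m)=p^r \,\right\}. \] Then $A(p^r)$ has a solution only if $(p,s_1,s_2,\ldots,s_r)=(p,l,l-1,\ldots,l-1)$ and $l_r-1=(l-1)p^{r-1}$. Furthermore, $A(p^r)=(l_r-1)p+1=(l-1)p^r+1$ holds, and is the smallest possible value, if and only if one of the following cases holds: (1) $l-1$ has no irregular prime factors; (2) if $q$ is an irregular prime divisor of $l-1$, then all irregular pairs $(q,l')$ satisfy $(l-1)p^r\not\equiv l'-1 \pmod{q-1}$.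
   Context: $B_n$ denotes the $n$-th Bernoulli number ($\frac{z}{e^z-1}=\sum_{n\ge0}B_n\frac{z^n}{n!}$); $\operatorname{num}(r)$ is the numerator of a rational number $r$ in lowest terms; $\varphi$ is Euler's function. For an odd prime $p$, $(p,l)$ is an irregular pair if $l$ is even, $2\le l\le p-3$ and $p\mid B_l$; a prime is irregular if it has an irregular pair. For $n\ge1$, $(p,l)$ is an irregular pair of order $n$ if $l$ is even, $2\le l<\varphi(p^n)$ and $p^n\mid B_l/l$ (divides the numerator); the set of these is $\Psi^{\rm irr}_n$. For $(p,l)\in\Psi^{\rm irr}_n$ write $l=\sum_{\nu=1}^n s_\nu\varphi(p^{\nu-1})$ with $0\le s_\nu<p$ (and $s_1$ even, $2\le s_1\le p-3$); then $(p,s_1,\ldots,s_n)$ is the associated pair and the set of these is $\widehat{\Psi}^{\rm irr}_n$. For an irregular pair $(p,l)$, $\Delta_{(p,l)}$ is the integer in $[0,p)$ with $\Delta_{(p,l)}\equiv p^{-1}\left(\frac{B_{l+\varphi(p)}}{l+\varphi(p)}-\frac{B_l}{l}\right)\pmod p$. Known fact (from earlier work): if $\Delta_{(p,l)}\neq0$, then for each $n\ge1$ there is exactly one irregular pair of order $n$ corresponding to $(p,l)$, i.e. a unique sequence $(s_\nu)_{\nu\ge1}$ with $s_1=l$ and $(p,s_1,\ldots,s_n)\in\widehat{\Psi}^{\rm irr}_n$ for all $n$; $l_n$ denotes $\sum_{\nu=1}^n s_\nu\varphi(p^{\nu-1})$. *)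

theory Defs
  imports "HOL-Number_Theory.Number_Theory" "HOL-Computational_Algebra.Formal_Power_Series"
begin

definition bernoulli :: "nat \<Rightarrow> rat" where
  "bernoulli n = fact n * fps_nth (fps_X / (fps_exp 1 - 1)) n"

definition num :: "rat \<Rightarrow> int" where
  "num r = fst (quotient_of r)"

definition den :: "rat \<Rightarrow> int" where
  "den r = snd (quotient_of r)"

definition irregular_pair :: "nat \<Rightarrow> nat \<Rightarrow> bool" where
  "irregular_pair p l \<longleftrightarrow> prime p \<and> odd p \<and> even l \<and> 2 \<le> l \<and> l + 3 \<le> p
      \<and> int p dvd num (bernoulli l)"

definition irregular_prime :: "nat \<Rightarrow> bool" where
  "irregular_prime p \<longleftrightarrow> prime p \<and> odd p \<and> (\<exists>l. irregular_pair p l)"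

definition psi_irr :: "nat \<Rightarrow> (nat \<times> nat) set" where
  "psi_irr n = {(p, l). prime p \<and> odd p \<and> even l \<and> 2 \<le> l \<and> l < totient (p ^ n)
      \<and> int (p ^ n) dvd num (bernoulli l / of_nat l)}"

definition rat_mod :: "rat \<Rightarrow> nat \<Rightarrow> nat" where
  "rat_mod y p = (THE d. d < p \<and> [int d * den y = num y] (mod int p))"

definition Delta :: "nat \<Rightarrow> nat \<Rightarrow> nat" where
  "Delta p l = rat_mod ((bernoulli (l + totient p) / of_nat (l + totient p)
                          - bernoulli l / of_nat l) / of_nat p) p"

definition lsum :: "nat \<Rightarrow> (nat \<Rightarrow> nat) \<Rightarrow> nat \<Rightarrow> nat" where
  "lsum p s n = (\<Sum>\<nu>=1..n. s \<nu> * totient (p ^ (\<nu> - 1)))"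

definition Q :: "nat \<Rightarrow> rat" where
  "Q m = of_int (num (bernoulli m / of_nat m))
         / of_int (num (bernoulli m / (of_nat m * (of_nat m - 1))))"

definition A_set :: "nat \<Rightarrow> nat \<Rightarrow> nat \<Rightarrow> nat set" where
  "A_set p r lr = {m. \<exists>k. m = lr + k * totient (p ^ r) \<and> Q m = of_nat (p ^ r)}"

definition A :: "nat \<Rightarrow> nat \<Rightarrow> nat \<Rightarrow> nat" where
  "A p r lr = (LEAST m. m \<in> A_set p r lr)"

end

theory Submission
  imports Defs
begin

text \<open>
  The proof rests on three classical congruences for Bernoulli numbers: the theorem of
  von Staudt and Clausen, Voronoi's congruence and Kummer's congruences modulo \<open>p\<^sup>r\<close>. For even \<open>m \<ge> 2\<close> the number \<open>B\<^sub>m\<close> is nonzero and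
  \<open>Q m = gcd (num (B\<^sub>m / m)) (m - 1)\<close>, so every \<open>m\<close> counted by \<open>A(p\<^sup>r)\<close> satisfies
  \<open>p\<^sup>r dvd m - 1\<close>. Together with \<open>m \<equiv> l\<^sub>r \<equiv> l (mod p - 1)\<close> this gives
  \<open>m \<ge> (l - 1) p\<^sup>r + 1\<close>, and together with \<open>m \<equiv> l\<^sub>r (mod \<phi>(p\<^sup>r))\<close> it forces
  \<open>p\<^sup>r\<^sup>-\<^sup>1 dvd l\<^sub>r - 1\<close>, i.e. the digits \<open>s\<^sub>2 = \<dots> = s\<^sub>r = l - 1\<close>.
  In that case \<open>M = (l - 1) p\<^sup>r + 1 \<equiv> l\<^sub>r (mod \<phi>(p\<^sup>r))\<close>, so Kummer's congruence gives
  \<open>p\<^sup>r dvd num (B\<^sub>M / M)\<close>, and \<open>M\<close> is counted iff no prime \<open>q dvd l - 1\<close> divides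
  \<open>num (B\<^sub>M / M)\<close>. By Kummer's congruence modulo \<open>q\<close>, such a \<open>q\<close> divides it iff
  \<open>M \<equiv> l' (mod q - 1)\<close> for an irregular pair \<open>(q, l')\<close>.
\<close>

section \<open>Numerators and \<open>p\<close>-adic divisibility of rationals\<close>

lemma num_den_eq: "x = of_int (num x) / of_int (den x)"
  unfolding num_def den_def by (rule quotient_of_div) simp

lemma den_pos: "den x > 0"
  unfolding den_def by (rule quotient_of_denom_pos')

lemma coprime_num_den: "coprime (num x) (den x)"
  unfolding num_def den_def by (rule quotient_of_coprime) simp

lemma num_eqI:
  assumes "b > 0" "coprime a b" "x = of_int a / of_int b"
  shows "num x = a"
proof -
  have "quotient_of x = (a, b)"
    using assms by (simp add: Fract_of_int_quotient[symmetric] quotient_of_Fract)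
  then show ?thesis by (simp add: num_def)
qed

lemma num_eq_0_iff [simp]: "num x = 0 \<longleftrightarrow> x = 0"
  using num_den_eq[of x] by (auto simp: num_def)

lemma num_0 [simp]: "num 0 = 0"
  by simp

text \<open>\<open>padic_dvd p n x\<close> says that \<open>x \<in> p\<^sup>n \<int>\<^sub>(\<^sub>p\<^sub>)\<close>, i.e.\ that the \<open>p\<close>-adic valuation of \<open>x\<close> is at least \<open>n\<close>.\<close>

definition padic_dvd :: "nat \<Rightarrow> nat \<Rightarrow> rat \<Rightarrow> bool" where
  "padic_dvd p n x \<longleftrightarrow>
     (\<exists>a b. b \<noteq> 0 \<and> \<not> int p dvd b \<and> int p ^ n dvd a \<and> x = of_int a / of_int b)"

lemma padic_dvdI:
  "b \<noteq> 0 \<Longrightarrow> \<not> int p dvd b \<Longrightarrow> int p ^ n dvd a \<Longrightarrow> x = of_int a / of_int b \<Longrightarrow> padic_dvd p n x"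
  unfolding padic_dvd_def by blast

lemma padic_dvdE:
  assumes "padic_dvd p n x"
  obtains a b where "b \<noteq> 0" "\<not> int p dvd b" "int p ^ n dvd a" "x = of_int a / of_int b"
  using assms unfolding padic_dvd_def by blast

lemma padic_dvd_of_int: "prime p \<Longrightarrow> int p ^ n dvd a \<Longrightarrow> padic_dvd p n (of_int a)"
  by (rule padic_dvdI[of 1]) (use prime_gt_1_nat[of p] in auto)

lemma padic_dvd_0 [simp]: "prime p \<Longrightarrow> padic_dvd p n 0"
  using padic_dvd_of_int[of p n 0] by simp

lemma padic_dvd_mono:
  assumes "padic_dvd p n x" "m \<le> n"
  shows "padic_dvd p m x"
proof -
  obtain a b where ab: "b \<noteq> 0" "\<not> int p dvd b" "int p ^ n dvd a" "x = of_int a / of_int b"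
    using assms(1) by (rule padic_dvdE)
  moreover have "int p ^ m dvd a"
    using dvd_trans[OF le_imp_power_dvd[OF assms(2)] ab(3)] .
  ultimately show ?thesis
    by (intro padic_dvdI)
qed

lemma padic_dvd_uminus:
  assumes "padic_dvd p n x"
  shows "padic_dvd p n (- x)"
proof -
  obtain a b where "b \<noteq> 0" "\<not> int p dvd b" "int p ^ n dvd a" "x = of_int a / of_int b"
    using assms by (rule padic_dvdE)
  then show ?thesis
    by (intro padic_dvdI[of b p n "- a"]) auto
qed

lemma padic_dvd_add:
  assumes "prime p" "padic_dvd p n x" "padic_dvd p n y"
  shows "padic_dvd p n (x + y)"
proof -
  obtain a b where ab: "b \<noteq> 0" "\<not> int p dvd b" "int p ^ n dvd a" "x = of_int a / of_int b"
    using assms(2) by (rule padic_dvdE)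
  obtain c d where cd: "d \<noteq> 0" "\<not> int p dvd d" "int p ^ n dvd c" "y = of_int c / of_int d"
    using assms(3) by (rule padic_dvdE)
  show ?thesis
  proof (rule padic_dvdI)
    show "\<not> int p dvd b * d"
      using ab cd assms(1) by (simp add: prime_dvd_mult_iff)
    show "x + y = of_int (a * d + c * b) / of_int (b * d)"
      using ab cd by (simp add: field_simps)
  qed (use ab cd in auto)
qed

lemma padic_dvd_diff:
  "prime p \<Longrightarrow> padic_dvd p n x \<Longrightarrow> padic_dvd p n y \<Longrightarrow> padic_dvd p n (x - y)"
  using padic_dvd_add[of p n x "- y"] padic_dvd_uminus[of p n y] by simp

lemma padic_dvd_sum:
  "prime p \<Longrightarrow> (\<And>i. i \<in> S \<Longrightarrow> padic_dvd p n (f i)) \<Longrightarrow> padic_dvd p n (sum f S)"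
  by (induction S rule: infinite_finite_induct) (auto intro: padic_dvd_add)

lemma padic_dvd_mult:
  assumes "prime p" "padic_dvd p n x" "padic_dvd p m y"
  shows "padic_dvd p (n + m) (x * y)"
proof -
  obtain a b where ab: "b \<noteq> 0" "\<not> int p dvd b" "int p ^ n dvd a" "x = of_int a / of_int b"
    using assms(2) by (rule padic_dvdE)
  obtain c d where cd: "d \<noteq> 0" "\<not> int p dvd d" "int p ^ m dvd c" "y = of_int c / of_int d"
    using assms(3) by (rule padic_dvdE)
  show ?thesis
  proof (rule padic_dvdI)
    show "\<not> int p dvd b * d"
      using ab cd assms(1) by (simp add: prime_dvd_mult_iff)
    show "int p ^ (n + m) dvd a * c"
      using ab cd by (simp add: power_add mult_dvd_mono)
  qed (use ab cd in auto)
qed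

lemma padic_dvd_mult_of_int: "prime p \<Longrightarrow> padic_dvd p n x \<Longrightarrow> padic_dvd p n (of_int c * x)"
  using padic_dvd_mult[of p 0 "of_int c" n x] padic_dvd_of_int[of p 0 c] by simp

lemma padic_dvd_mult_of_nat: "prime p \<Longrightarrow> padic_dvd p n x \<Longrightarrow> padic_dvd p n (of_nat c * x)"
  using padic_dvd_mult_of_int[of p n x "int c"] by simp

lemma padic_dvd_of_int_iff:
  assumes "prime p"
  shows "padic_dvd p n (of_int c) \<longleftrightarrow> int p ^ n dvd c"
proof
  assume "padic_dvd p n (of_int c)"
  then obtain a b where ab: "b \<noteq> 0" "\<not> int p dvd b" "int p ^ n dvd a" "of_int c = (of_int a / of_int b :: rat)"
    by (rule padic_dvdE)
  then have "int p ^ n dvd c * b"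
    by (simp add: field_simps flip: of_int_mult)
  moreover have "coprime (int p ^ n) b"
    using ab(2) assms by (simp add: prime_imp_coprime)
  ultimately show "int p ^ n dvd c"
    using coprime_dvd_mult_left_iff by blast
qed (use assms padic_dvd_of_int in blast)

lemma padic_dvd_iff_dvd_num:
  assumes "prime p" "n \<ge> 1"
  shows "padic_dvd p n x \<longleftrightarrow> int p ^ n dvd num x"
proof
  assume "padic_dvd p n x"
  then have "padic_dvd p n (of_int (den x) * x)"
    by (rule padic_dvd_mult_of_int[OF assms(1)])
  also have "of_int (den x) * x = of_int (num x)"
    using den_pos[of x] by (subst num_den_eq[of x]) simp
  finally show "int p ^ n dvd num x"
    using padic_dvd_of_int_iff[OF assms(1)] by simp
next
  assume dvd: "int p ^ n dvd num x"
  have "\<not> int p dvd den x"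
  proof
    assume "int p dvd den x"
    moreover have "int p dvd num x"
      using dvd_trans[OF dvd_power[of n "int p"] dvd] assms(2) by simp
    ultimately have "is_unit (int p)"
      using coprime_num_den[of x] coprime_common_divisor by blast
    then show False
      using assms(1) by simp
  qed
  then show "padic_dvd p n x"
    using dvd den_pos[of x] num_den_eq[of x] by (intro padic_dvdI[of "den x" p n "num x"]) auto
qed

lemma padic_dvd_divide_of_int:
  assumes "prime p" "\<not> int p dvd c" "padic_dvd p n x"
  shows "padic_dvd p n (x / of_int c)"
proof -
  obtain a b where ab: "b \<noteq> 0" "\<not> int p dvd b" "int p ^ n dvd a" "x = of_int a / of_int b"
    using assms(3) by (rule padic_dvdE)
  show ?thesis
  proof (rule padic_dvdI)
    show "b * c \<noteq> 0" "\<not> int p dvd b * c"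
      using ab assms by (auto simp: prime_dvd_mult_iff)
    show "x / of_int c = of_int a / of_int (b * c)"
      using ab by simp
  qed (fact ab)
qed

lemma padic_dvd_cancel_of_int:
  assumes "prime p" "\<not> int p dvd c" "padic_dvd p n (of_int c * x)"
  shows "padic_dvd p n x"
proof -
  have "c \<noteq> 0"
    using assms(2) by auto
  then show ?thesis
    using padic_dvd_divide_of_int[OF assms] by simp
qed

lemma padic_dvd_prime_power_mult_iff:
  assumes "prime p"
  shows "padic_dvd p (n + r) (of_nat p ^ r * x) \<longleftrightarrow> padic_dvd p n x"
proof
  assume "padic_dvd p (n + r) (of_nat p ^ r * x)"
  then obtain a b where ab: "b \<noteq> 0" "\<not> int p dvd b" "int p ^ (n + r) dvd a"
      "of_nat p ^ r * x = of_int a / of_int b"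
    by (rule padic_dvdE)
  obtain c where "a = int p ^ (n + r) * c"
    using ab(3) by blast
  then have "of_nat p ^ r * x = of_nat p ^ r * (of_int (int p ^ n * c) / of_int b :: rat)"
    using ab(4) by (simp add: power_add mult_ac)
  moreover have "(of_nat p ^ r :: rat) \<noteq> 0"
    using assms by (simp add: prime_gt_0_nat)
  ultimately have "x = of_int (int p ^ n * c) / of_int b"
    by (metis mult_left_cancel)
  then show "padic_dvd p n x"
    using ab by (intro padic_dvdI[of b p n "int p ^ n * c"]) auto
next
  assume "padic_dvd p n x"
  then show "padic_dvd p (n + r) (of_nat p ^ r * x)"
    using padic_dvd_mult[OF assms padic_dvd_of_int[OF assms, of r "int p ^ r"]]
    by (simp add: add.commute)
qed

lemma padic_dvd_prime_power_div:
  assumes "prime p" "m > 0" "e + multiplicity p m \<le> a"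
  shows "padic_dvd p e (of_nat p ^ a / of_nat m)"
proof -
  define v where "v = multiplicity p m"
  obtain u where u: "m = p ^ v * u" "\<not> p dvd u"
    unfolding v_def by (rule multiplicity_decompose'[of m p]) (use assms in auto)
  have "(of_nat p ^ a :: rat) = of_nat p ^ v * of_nat p ^ (a - v)"
    using assms(3) unfolding v_def by (simp flip: power_add)
  then have "(of_nat p ^ a / of_nat m :: rat) = of_int (int p ^ (a - v)) / of_int (int u)"
    using assms(1) by (simp add: u(1) prime_gt_0_nat)
  moreover have "int p ^ e dvd int p ^ (a - v)"
    using assms(3) by (intro le_imp_power_dvd) (simp add: v_def)
  ultimately show ?thesis
    using u(2) by (intro padic_dvdI[of "int u" p e "int p ^ (a - v)"]) (auto intro: Nat.gr0I)
qed

lemma Bernoulli_inequality_nat: "(p::nat) \<ge> 1 \<Longrightarrow> (p - 1) * v + 1 \<le> p ^ v"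
proof (induction v)
  case (Suc v)
  have "(p - 1) * Suc v + 1 \<le> p ^ v + (p - 1) * 1"
    using Suc by simp
  also have "\<dots> \<le> p ^ v + (p - 1) * p ^ v"
    using Suc.prems by (intro add_left_mono mult_left_mono) auto
  finally show ?case
    using Suc.prems by (simp add: algebra_simps)
qed simp

lemma multiplicity_bound:
  assumes "prime p" "m > 0"
  shows "(p - 1) * multiplicity p m + 1 \<le> m"
proof -
  have "p ^ multiplicity p m \<le> m"
    using assms by (intro dvd_imp_le multiplicity_dvd) auto
  moreover have "(p - 1) * multiplicity p m + 1 \<le> p ^ multiplicity p m"
    using prime_gt_0_nat[OF assms(1)] by (intro Bernoulli_inequality_nat) simp
  ultimately show ?thesis
    by linarith
qed

lemma padic_dvd_prime_power_pred_div:
  assumes "prime p" "odd p" "m \<ge> 2"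
  shows "padic_dvd p 1 (of_nat p ^ (m - 1) / of_nat m)"
proof (rule padic_dvd_prime_power_div[OF assms(1)])
  have "p \<ge> 3"
    using assms(1,2) prime_ge_2_nat[of p] by (cases "p = 2") auto
  then have "2 * multiplicity p m \<le> (p - 1) * multiplicity p m"
    by (intro mult_right_mono) auto
  then show "1 + multiplicity p m \<le> m - 1"
    using multiplicity_bound[OF assms(1), of m] assms(3) by linarith
qed (use assms in auto)

lemma padic_dvd_prime_power_pred_div_ge_3:
  assumes "prime p" "p \<ge> 5" "r \<ge> 1" "m \<ge> 3"
  shows "padic_dvd p (2 * r) (of_nat p ^ (r * m - 1) / of_nat m)"
proof (rule padic_dvd_prime_power_div[OF assms(1)])
  define v where "v = multiplicity p m"
  have "4 * v \<le> (p - 1) * v"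
    using assms(2) by (intro mult_right_mono) auto
  then have "v + 3 \<le> m"
    using multiplicity_bound[OF assms(1), of m] assms(4) unfolding v_def by linarith
  moreover have "m - 2 \<le> r * (m - 2)"
    using assms(3) by simp
  ultimately show "2 * r + multiplicity p m \<le> r * m - 1"
    using assms(4) unfolding v_def by (simp add: diff_mult_distrib2 algebra_simps)
qed (use assms in auto)

section \<open>Power sums and the theorem of von Staudt and Clausen\<close>

lemma fps_bernoulli_times_exp:
  "Abs_fps (\<lambda>n. bernoulli n / fact n) * (fps_exp 1 - 1) = (fps_X :: rat fps)"
proof -
  have "fps_nth (fps_exp (1::rat) - 1) 1 \<noteq> 0"
    by simp
  then have "fps_exp (1::rat) - 1 \<noteq> 0"
    by (metis fps_zero_nth)
  moreover have "subdegree (fps_exp (1::rat) - 1) = 1"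
    by (rule subdegreeI) auto
  moreover have "Abs_fps (\<lambda>n. bernoulli n / fact n) = fps_X / (fps_exp 1 - 1 :: rat fps)"
    by (rule fps_ext) (simp add: bernoulli_def)
  ultimately show ?thesis
    by (simp add: fps_times_divide_eq)
qed

lemma sum_fps_exp_times_exp: "(\<Sum>j<N. fps_exp (of_nat j :: rat)) * (fps_exp 1 - 1) = fps_exp (of_nat N) - 1"
proof (induction N)
  case (Suc N)
  have "fps_exp (of_nat N :: rat) * (fps_exp 1 - 1) = fps_exp (of_nat (Suc N)) - fps_exp (of_nat N)"
    by (simp add: algebra_simps flip: fps_exp_add_mult)
  then show ?case
    using Suc by (simp add: algebra_simps)
qed simp

lemma sum_powers_bernoulli:
  "(\<Sum>j<N. of_nat j ^ k :: rat) =
     (\<Sum>i\<le>k. of_nat (k choose i) * bernoulli i * of_nat N ^ (Suc k - i) / of_nat (Suc k - i))"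
proof -
  define B where "B = Abs_fps (\<lambda>n. bernoulli n / fact n :: rat)"
  have "(\<Sum>j<N. of_nat j ^ k / fact k :: rat) = fps_nth (fps_X * (\<Sum>j<N. fps_exp (of_nat j))) (Suc k)"
    by (simp only: fps_X_mult_nth fps_sum_nth fps_exp_nth) simp
  also have "fps_X * (\<Sum>j<N. fps_exp (of_nat j)) = B * ((\<Sum>j<N. fps_exp (of_nat j)) * (fps_exp 1 - 1))"
    unfolding B_def fps_bernoulli_times_exp[symmetric] by (simp only: mult_ac)
  also have "\<dots> = B * (fps_exp (of_nat N) - 1)"
    by (simp only: sum_fps_exp_times_exp)
  also have "fps_nth \<dots> (Suc k) = (\<Sum>i=0..k. fps_nth B i * fps_nth (fps_exp (of_nat N) - 1) (Suc k - i))"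
    by (simp add: fps_mult_nth sum.atLeast0_atMost_Suc)
  also have "\<dots> = (\<Sum>i\<le>k. bernoulli i / fact i * (of_nat N ^ (Suc k - i) / fact (Suc k - i)))"
    by (intro sum.cong) (auto simp: B_def atLeast0AtMost)
  finally have eq: "(\<Sum>j<N. of_nat j ^ k / fact k :: rat) =
      (\<Sum>i\<le>k. bernoulli i / fact i * (of_nat N ^ (Suc k - i) / fact (Suc k - i)))" .
  have "(\<Sum>j<N. of_nat j ^ k :: rat) = fact k * (\<Sum>j<N. of_nat j ^ k / fact k)"
    by (simp add: sum_distrib_left)
  also have "\<dots> = (\<Sum>i\<le>k. fact k * (bernoulli i / fact i * (of_nat N ^ (Suc k - i) / fact (Suc k - i))))"
    by (simp only: eq sum_distrib_left)
  also have "\<dots> = (\<Sum>i\<le>k. of_nat (k choose i) * bernoulli i * of_nat N ^ (Suc k - i) / of_nat (Suc k - i))"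
  proof (intro sum.cong refl)
    fix i assume "i \<in> {..k}"
    then have "(fact k :: rat) = of_nat (k choose i) * fact i * (fact (Suc k - i) / of_nat (Suc k - i))"
      by (simp add: binomial_fact Suc_diff_le)
    then show "fact k * (bernoulli i / fact i * (of_nat N ^ (Suc k - i) / fact (Suc k - i))) =
        of_nat (k choose i) * bernoulli i * of_nat N ^ (Suc k - i) / of_nat (Suc k - i)"
      by (simp add: field_simps)
  qed
  finally show ?thesis .
qed

definition power_sum :: "nat \<Rightarrow> nat \<Rightarrow> int" where
  "power_sum N k = (\<Sum>j<N. int j ^ k)"

lemma power_sum_bernoulli:
  "of_int (power_sum N k) = of_nat N * bernoulli k +
     (\<Sum>i<k. of_nat (k choose i) * bernoulli i * of_nat N ^ (Suc k - i) / of_nat (Suc k - i))"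
  using sum_powers_bernoulli[where N = N and k = k] by (simp add: power_sum_def lessThan_Suc_atMost[symmetric])

lemma power_sum_prime_eq:
  assumes "prime p" "k \<ge> 1"
  shows "power_sum p k = (\<Sum>j\<in>{1..<p}. int j ^ k)"
proof -
  have "{..<p} = insert 0 {1..<p}"
    using prime_gt_0_nat[OF assms(1)] by auto
  then show ?thesis
    unfolding power_sum_def using assms(2) by simp
qed

lemma prime_dvd_power_sum_odd:
  assumes "prime p" "odd p" "odd k"
  shows "int p dvd power_sum p k"
proof -
  define S where "S = (\<Sum>j\<in>{1..<p}. int j ^ k)"
  have "S = (\<Sum>j\<in>{1..<p}. int (p + 1 - Suc j) ^ k)"
    unfolding S_def by (rule sum.atLeastLessThan_rev)
  also have "[\<dots> = (\<Sum>j\<in>{1..<p}. - (int j ^ k))] (mod int p)"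
  proof (rule cong_sum)
    fix j assume "j \<in> {1..<p}"
    then have "int (p + 1 - Suc j) = int p - int j"
      by auto
    moreover have "[(int p - int j) ^ k = (- int j) ^ k] (mod int p)"
      by (intro cong_pow) (simp add: cong_def)
    ultimately show "[int (p + 1 - Suc j) ^ k = - (int j ^ k)] (mod int p)"
      using assms(3) by (simp add: power_minus_odd)
  qed
  also have "(\<Sum>j\<in>{1..<p}. - (int j ^ k)) = - S"
    unfolding S_def by (simp add: sum_negf)
  finally have "int p dvd 2 * S"
    by (simp add: cong_iff_dvd_diff)
  moreover have "\<not> int p dvd 2"
  proof
    assume "int p dvd 2"
    then have "p \<le> 2"
      using zdvd_imp_le[of "int p" 2] by simp
    then show False
      using assms(1,2) prime_ge_2_nat[of p] by (cases "p = 2") auto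
  qed
  ultimately have "int p dvd S"
    using assms(1) by (simp add: prime_dvd_mult_iff)
  moreover have "k \<ge> 1"
    using assms(3) by (cases k) auto
  ultimately show ?thesis
    using power_sum_prime_eq[OF assms(1)] S_def by simp
qed

lemma prime_dvd_power_sum_plus_1:
  assumes "prime p" "(p - 1) dvd k" "k \<ge> 1"
  shows "int p dvd power_sum p k + 1"
proof -
  have "[(\<Sum>j\<in>{1..<p}. int j ^ k) = (\<Sum>j\<in>{1..<p}. 1)] (mod int p)"
  proof (rule cong_sum)
    fix j assume "j \<in> {1..<p}"
    then have "\<not> p dvd j"
      by (auto dest: dvd_imp_le)
    then have "[j ^ (p - 1) = 1] (mod p)"
      by (rule fermat_theorem[OF assms(1)])
    then have "[(j ^ (p - 1)) ^ (k div (p - 1)) = 1] (mod p)"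
      using cong_pow by fastforce
    then have "[j ^ k = 1] (mod p)"
      using assms(2) by (simp flip: power_mult)
    then show "[int j ^ k = 1] (mod int p)"
      by (metis cong_int_iff of_nat_1 of_nat_power)
  qed
  then have "[power_sum p k + 1 = int p - 1 + 1] (mod int p)"
    using power_sum_prime_eq[OF assms(1,3)] prime_gt_0_nat[OF assms(1)] by (intro cong_add) simp_all
  then show ?thesis
    by (simp add: cong_0_iff[symmetric] cong_def)
qed

text \<open>Strong induction on \<open>k\<close> through the power sum formula with \<open>N = p\<close>: all of its terms except \<open>p B\<^sub>k\<close> lie in \<open>p \<int>\<^sub>(\<^sub>p\<^sub>)\<close>.\<close>

lemma prime_mult_bernoulli_cong_power_sum:
  assumes "prime p" "odd p"
  shows "padic_dvd p 1 (of_nat p * bernoulli k - of_int (power_sum p k))"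
proof (induction k rule: less_induct)
  case (less k)
  have "padic_dvd p 1 (of_nat (k choose i) * bernoulli i * of_nat p ^ (Suc k - i) / of_nat (Suc k - i))"
    if "i < k" for i
  proof -
    have "padic_dvd p 0 (of_nat p * bernoulli i)"
    proof -
      have "of_nat p * bernoulli i = (of_nat p * bernoulli i - of_int (power_sum p i)) + of_int (power_sum p i)"
        by simp
      moreover have "padic_dvd p 0 (\<dots>)"
        by (intro padic_dvd_add[OF assms(1)] padic_dvd_of_int[OF assms(1)]
            padic_dvd_mono[OF less.IH[OF that]]) auto
      ultimately show ?thesis
        by simp
    qed
    moreover have "padic_dvd p 1 (of_nat p ^ (k - i) / of_nat (Suc k - i))"
      using padic_dvd_prime_power_pred_div[OF assms, of "Suc k - i"] that by simp
    ultimately have "padic_dvd p (0 + 1) (of_nat p * bernoulli i * (of_nat p ^ (k - i) / of_nat (Suc k - i)))"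
      by (rule padic_dvd_mult[OF assms(1)])
    then have "padic_dvd p 1 (of_nat (k choose i) * (of_nat p * bernoulli i * (of_nat p ^ (k - i) / of_nat (Suc k - i))))"
      by (intro padic_dvd_mult_of_nat[OF assms(1)]) simp
    moreover have "Suc k - i = Suc (k - i)"
      using that by simp
    ultimately show ?thesis
      by (simp add: mult_ac)
  qed
  then have "padic_dvd p 1 (- (\<Sum>i<k. of_nat (k choose i) * bernoulli i * of_nat p ^ (Suc k - i) / of_nat (Suc k - i)))"
    by (intro padic_dvd_uminus padic_dvd_sum[OF assms(1)]) simp
  then show ?case
    by (simp add: power_sum_bernoulli)
qed

lemma padic_dvd_prime_mult_bernoulli:
  assumes "prime p" "odd p"
  shows "padic_dvd p 0 (of_nat p * bernoulli k)"
proof -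
  have "padic_dvd p 0 ((of_nat p * bernoulli k - of_int (power_sum p k)) + of_int (power_sum p k))"
    by (intro padic_dvd_add[OF assms(1)] padic_dvd_of_int[OF assms(1)]
        padic_dvd_mono[OF prime_mult_bernoulli_cong_power_sum[OF assms]]) auto
  then show ?thesis
    by simp
qed

lemma padic_dvd_bernoulli_odd:
  assumes "prime p" "odd p" "odd k"
  shows "padic_dvd p 0 (bernoulli k)"
proof -
  have "padic_dvd p 1 ((of_nat p * bernoulli k - of_int (power_sum p k)) + of_int (power_sum p k))"
    using prime_dvd_power_sum_odd[OF assms]
    by (intro padic_dvd_add[OF assms(1)] prime_mult_bernoulli_cong_power_sum[OF assms(1,2)]
        padic_dvd_of_int[OF assms(1)]) simp
  then have "padic_dvd p (0 + 1) (of_nat p ^ 1 * bernoulli k)"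
    by simp
  then show ?thesis
    using padic_dvd_prime_power_mult_iff[OF assms(1)] by blast
qed

lemma von_staudt_clausen:
  assumes "prime p" "odd p" "(p - 1) dvd k" "k \<ge> 1"
  shows "padic_dvd p 1 (of_nat p * bernoulli k + 1)"
proof -
  have "padic_dvd p 1 ((of_nat p * bernoulli k - of_int (power_sum p k)) + of_int (power_sum p k + 1))"
    using prime_dvd_power_sum_plus_1[OF assms(1,3,4)]
    by (intro padic_dvd_add[OF assms(1)] prime_mult_bernoulli_cong_power_sum[OF assms(1,2)]
        padic_dvd_of_int[OF assms(1)]) simp
  then show ?thesis
    by simp
qed

lemma not_prime_dvd_num_bernoulli_div:
  assumes "prime p" "odd p" "(p - 1) dvd k" "k \<ge> 1"
  shows "\<not> int p dvd num (bernoulli k / of_nat k)"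
proof
  assume "int p dvd num (bernoulli k / of_nat k)"
  then have "padic_dvd p 1 (bernoulli k / of_nat k)"
    using padic_dvd_iff_dvd_num[OF assms(1), of 1] by simp
  then have "padic_dvd p 1 (of_nat k * (bernoulli k / of_nat k))"
    by (rule padic_dvd_mult_of_nat[OF assms(1)])
  then have "padic_dvd p 1 (bernoulli k)"
    using assms(4) by simp
  then have "padic_dvd p (1 + 1) (of_nat p ^ 1 * bernoulli k)"
    by (simp only: padic_dvd_prime_power_mult_iff[OF assms(1)])
  then have "padic_dvd p 1 (of_nat p ^ 1 * bernoulli k)"
    by (rule padic_dvd_mono) simp
  with von_staudt_clausen[OF assms]
  have "padic_dvd p 1 ((of_nat p * bernoulli k + 1) - of_nat p ^ 1 * bernoulli k)"
    by (rule padic_dvd_diff[OF assms(1)])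
  then have "int p ^ 1 dvd 1"
    using padic_dvd_of_int_iff[OF assms(1), of 1 1] by simp
  then show False
    using assms(1) by simp
qed

lemma bernoulli_even_neq_0:
  assumes "even k" "k \<ge> 2"
  shows "bernoulli k \<noteq> 0"
proof
  assume "bernoulli k = 0"
  then show False
    using not_prime_dvd_num_bernoulli_div[of 3 k] assms by simp
qed

section \<open>Voronoi's congruence and Kummer's congruences\<close>

lemma power_sub_mult_cong:
  fixes x y N :: int
  shows "[(x - N * y) ^ Suc k = x ^ Suc k - of_nat (Suc k) * x ^ k * N * y] (mod N ^ 2)"
proof (induction k)
  case (Suc k)
  then obtain c where "(x - N * y) ^ Suc k - (x ^ Suc k - of_nat (Suc k) * x ^ k * N * y) = N ^ 2 * c"
    unfolding cong_iff_dvd_diff by blast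
  then have c: "(x - N * y) ^ Suc k = x ^ Suc k - of_nat (Suc k) * x ^ k * N * y + N ^ 2 * c"
    by (simp add: algebra_simps)
  have "(x - N * y) ^ Suc (Suc k) = (x - N * y) * (x ^ Suc k - of_nat (Suc k) * x ^ k * N * y + N ^ 2 * c)"
    by (subst power_Suc) (simp only: c)
  then have "(x - N * y) ^ Suc (Suc k) - (x ^ Suc (Suc k) - of_nat (Suc (Suc k)) * x ^ Suc k * N * y) =
      N ^ 2 * (c * x + of_nat (Suc k) * x ^ k * y ^ 2 - N * y * c)"
    by (simp add: algebra_simps power2_eq_square)
  then show ?case
    unfolding cong_iff_dvd_diff by simp
qed simp

lemma bij_betw_mult_mod_nat:
  fixes a N :: nat
  assumes "coprime a N" "N > 0"
  shows "bij_betw (\<lambda>j. j * a mod N) {..<N} {..<N}"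
proof -
  have "inj_on (\<lambda>j. j * a mod N) {..<N}"
  proof (rule inj_onI)
    fix i j assume "i \<in> {..<N}" "j \<in> {..<N}" "i * a mod N = j * a mod N"
    then show "i = j"
      using assms(1) cong_mult_rcancel_nat[of a N i j] by (simp add: cong_def coprime_commute)
  qed
  moreover have "(\<lambda>j. j * a mod N) ` {..<N} \<subseteq> {..<N}"
    using assms(2) by auto
  ultimately show ?thesis
    by (simp add: bij_betw_def endo_inj_surj)
qed

definition voronoi_sum :: "nat \<Rightarrow> nat \<Rightarrow> nat \<Rightarrow> int" where
  "voronoi_sum N a k = (\<Sum>j<N. int j ^ (k - 1) * int (j * a div N))"

lemma voronoi_congruence_int:
  assumes "coprime a N" "N > 0" "k \<ge> 1"
  shows "int N ^ 2 dvd (int a ^ k - 1) * power_sum N k - of_nat k * int a ^ (k - 1) * int N * voronoi_sum N a k"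
proof -
  obtain k' where k': "k = Suc k'"
    using assms(3) by (cases k) auto
  have "[int (j * a mod N) ^ k = (int j * int a) ^ k - of_nat k * (int j * int a) ^ (k - 1) * int N * int (j * a div N)]
      (mod int N ^ 2)" for j
  proof -
    have "int (j * a mod N) = int j * int a - int N * int (j * a div N)"
      by (simp add: of_nat_mod of_nat_div algebra_simps flip: of_nat_mult)
    then show ?thesis
      using power_sub_mult_cong[of "int j * int a" "int N" "int (j * a div N)" k'] by (simp add: k')
  qed
  then have cong: "[(\<Sum>j<N. int (j * a mod N) ^ k) =
      (\<Sum>j<N. (int j * int a) ^ k - of_nat k * (int j * int a) ^ (k - 1) * int N * int (j * a div N))] (mod int N ^ 2)"
    by (rule cong_sum)
  have permute:  "(\<Sum>j<N. int (j * a mod N) ^ k) = power_sum N k"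
    unfolding power_sum_def using sum.reindex_bij_betw[OF bij_betw_mult_mod_nat[OF assms(1,2)], of "\<lambda>j. int j ^ k"]
    by simp
  have expand: "(\<Sum>j<N. (int j * int a) ^ k - of_nat k * (int j * int a) ^ (k - 1) * int N * int (j * a div N)) =
      int a ^ k * power_sum N k - of_nat k * int a ^ (k - 1) * int N * voronoi_sum N a k"
    by (simp add: power_sum_def voronoi_sum_def sum_subtractf sum_distrib_left power_mult_distrib algebra_simps)
  have "[power_sum N k = int a ^ k * power_sum N k - of_nat k * int a ^ (k - 1) * int N * voronoi_sum N a k]
      (mod int N ^ 2)"
    using cong unfolding permute expand .
  then show ?thesis
    by (subst (asm) cong_sym_eq) (simp add: cong_iff_dvd_diff algebra_simps)
qed

lemma padic_dvd_bernoulli_odd_mult_square: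
  assumes "prime p" "p \<ge> 5" "odd j"
  shows "padic_dvd p (2 * r) (bernoulli j * of_nat (p ^ r) ^ 2 / of_nat 2)"
proof -
  have "odd p"
    using assms(1,2) by (intro prime_odd_nat) auto
  have "\<not> p dvd 2"
    using assms(2) by (auto dest: dvd_imp_le)
  then have "padic_dvd p (2 * r) (of_nat p ^ (2 * r) / of_nat 2)"
    by (intro padic_dvd_prime_power_div[OF assms(1)]) (simp_all add: not_dvd_imp_multiplicity_0)
  from padic_dvd_mult[OF assms(1) padic_dvd_bernoulli_odd[OF assms(1) \<open>odd p\<close> assms(3)] this]
  show ?thesis
    by (simp add: power_mult_distrib[symmetric] power_mult[symmetric] mult.commute[of r])
qed

lemma padic_dvd_bernoulli_mult_power_div:
  assumes "prime p" "p \<ge> 5" "r \<ge> 1" "m \<ge> 3"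
  shows "padic_dvd p (2 * r) (bernoulli i * of_nat (p ^ r) ^ m / of_nat m)"
proof -
  have "odd p"
    using assms(1,2) by (intro prime_odd_nat) auto
  from padic_dvd_mult[OF assms(1) padic_dvd_prime_mult_bernoulli[OF assms(1) \<open>odd p\<close>]
      padic_dvd_prime_power_pred_div_ge_3[OF assms]]
  have "padic_dvd p (2 * r) (of_nat p * bernoulli i * (of_nat p ^ (r * m - 1) / of_nat m))"
    by simp
  moreover have "r * m = Suc (r * m - 1)"
    using assms(3,4) by (simp add: Suc_le_eq)
  then have "(of_nat (p ^ r) :: rat) ^ m = of_nat p * of_nat p ^ (r * m - 1)"
    by (metis of_nat_power power_Suc power_mult)
  ultimately show ?thesis
    by (simp add: mult_ac)
qed

text \<open>The sum is the power sum formula for \<open>power_sum (p ^ r) k\<close> without its leading term \<open>p\<^sup>r B\<^sub>k\<close>.\<close>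

lemma padic_dvd_bernoulli_tail:
  assumes "prime p" "p \<ge> 5" "r \<ge> 1" "even k"
  shows "padic_dvd p (2 * r)
    (\<Sum>i<k. of_nat (k choose i) * bernoulli i * of_nat (p ^ r) ^ (Suc k - i) / of_nat (Suc k - i))"
proof (rule padic_dvd_sum[OF assms(1)])
  fix i assume "i \<in> {..<k}"
  then consider "Suc k - i = 2" "odd i" | "Suc k - i \<ge> 3"
    using assms(4) by fastforce
  then have "padic_dvd p (2 * r) (bernoulli i * of_nat (p ^ r) ^ (Suc k - i) / of_nat (Suc k - i))"
  proof cases
    case 1
    then show ?thesis
      using padic_dvd_bernoulli_odd_mult_square[OF assms(1,2) \<open>odd i\<close>] by simp
  next
    case 2
    then show ?thesis
      by (rule padic_dvd_bernoulli_mult_power_div[OF assms(1-3)])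
  qed
  from padic_dvd_mult_of_nat[OF assms(1) this, of "k choose i"]
  show "padic_dvd p (2 * r) (of_nat (k choose i) * bernoulli i * of_nat (p ^ r) ^ (Suc k - i) / of_nat (Suc k - i))"
    by (simp add: mult.assoc)
qed

lemma voronoi_congruence:
  assumes "prime p" "p \<ge> 5" "r \<ge> 1" "coprime a p" "even k" "k \<ge> 2" "\<not> p dvd k"
  shows "padic_dvd p r ((of_nat a ^ k - 1) * (bernoulli k / of_nat k)
            - of_nat a ^ (k - 1) * of_int (voronoi_sum (p ^ r) a k))"
proof -
  define N where "N = p ^ r"
  define S where "S = power_sum N k"
  define T where "T = voronoi_sum N a k"
  define E where "E = (\<Sum>i<k. of_nat (k choose i) * bernoulli i * of_nat N ^ (Suc k - i) / of_nat (Suc k - i) :: rat)"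
  define W where "W = (of_nat a ^ k - 1) * bernoulli k - of_nat k * of_nat a ^ (k - 1) * (of_int T :: rat)"
  have "int p ^ (2 * r) dvd (int a ^ k - 1) * S - of_nat k * int a ^ (k - 1) * int N * T"
    using voronoi_congruence_int[of a N k] assms(1,4,6)
    by (simp add: N_def S_def T_def prime_gt_0_nat power_mult mult.commute[of 2])
  then have "padic_dvd p (2 * r) (of_int ((int a ^ k - 1) * S - of_nat k * int a ^ (k - 1) * int N * T)
      - (of_int (int a ^ k - 1) * E))"
    using padic_dvd_bernoulli_tail[OF assms(1,2,3,5)]
    by (intro padic_dvd_diff[OF assms(1)] padic_dvd_mult_of_int[OF assms(1)] padic_dvd_of_int[OF assms(1)])
      (simp_all add: E_def N_def)
  moreover have "of_int ((int a ^ k - 1) * S - of_nat k * int a ^ (k - 1) * int N * T)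
      - of_int (int a ^ k - 1) * E = of_nat p ^ r * W"
    unfolding W_def S_def E_def N_def by (simp add: power_sum_bernoulli algebra_simps)
  ultimately have "padic_dvd p (r + r) (of_nat p ^ r * W)"
    by (simp add: mult_2)
  then have "padic_dvd p r (W / of_int (int k))"
    using assms(1,7) by (intro padic_dvd_divide_of_int) (simp_all add: padic_dvd_prime_power_mult_iff)
  moreover have "W / of_int (int k) =
      (of_nat a ^ k - 1) * (bernoulli k / of_nat k) - of_nat a ^ (k - 1) * of_int T"
    using assms(6) by (simp add: W_def field_simps)
  ultimately show ?thesis
    by (simp add: T_def N_def)
qed

lemma power_cong_totient:
  fixes a m k k' :: nat
  assumes "coprime a m" "[k = k'] (mod totient m)"
  shows "[a ^ k = a ^ k'] (mod m)"
proof -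
  have "[k = k'] (mod ord m a)"
    using assms by (meson cong_dvd_modulus_nat coprime_commute order_divides_totient)
  then show ?thesis
    using assms(1) by (simp add: order_divides_expdiff coprime_commute)
qed

lemma power_cong_totient_prime_power:
  fixes p r k k' j :: nat
  assumes "prime p" "[k = k'] (mod totient (p ^ r))" "r \<le> k" "r \<le> k'"
  shows "[j ^ k = j ^ k'] (mod p ^ r)"
proof (cases "p dvd j")
  case True
  then have "p ^ r dvd j ^ k" "p ^ r dvd j ^ k'"
    using assms(3,4) by (meson dvd_power_same dvd_trans le_imp_power_dvd)+
  then show ?thesis
    by (simp add: cong_def)
next
  case False
  then have "coprime p j"
    by (rule prime_imp_coprime[OF assms(1)])
  then have "coprime j (p ^ r)"
    by (simp add: coprime_commute)
  then show ?thesis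
    using power_cong_totient assms(2) by blast
qed

lemma prime_ge_5_if_not_pred_dvd_even:
  fixes p k :: nat
  assumes "prime p" "even k" "\<not> (p - 1) dvd k"
  shows "p \<ge> 5"
proof -
  have "p \<noteq> 2" "p \<noteq> 3"
    using assms(2,3) by auto
  moreover have "odd p"
    using assms(1) \<open>p \<noteq> 2\<close> prime_ge_2_nat[of p] by (intro prime_odd_nat) auto
  ultimately show ?thesis
    using prime_ge_2_nat[OF assms(1)] by presburger
qed

lemma primitive_root_power_not_cong_1:
  assumes "ord p a = p - 1" "\<not> (p - 1) dvd k"
  shows "\<not> int p dvd int a ^ k - 1"
proof
  assume "int p dvd int a ^ k - 1"
  then have "[int (a ^ k) = int 1] (mod int p)"
    by (simp add: cong_iff_dvd_diff)
  then have "[a ^ k = 1] (mod p)"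
    by (simp only: cong_int_iff)
  then show False
    using assms ord_divides'[of a k p] by simp
qed

lemma voronoi_sum_cong:
  assumes "prime p" "coprime a p" "[k = k'] (mod totient (p ^ r))" "r < k" "r < k'"
  shows "[int a ^ (k - 1) * voronoi_sum (p ^ r) a k = int a ^ (k' - 1) * voronoi_sum (p ^ r) a k']
    (mod int (p ^ r))"
proof -
  have "[(k - 1) + 1 = (k' - 1) + 1] (mod totient (p ^ r))"
    using assms(3-5) by simp
  then have cong_pred: "[k - 1 = k' - 1] (mod totient (p ^ r))"
    by (simp only: cong_add_rcancel_nat)
  show ?thesis
    unfolding voronoi_sum_def sum_distrib_left
  proof (intro cong_sum cong_mult)
    have "[a ^ (k - 1) = a ^ (k' - 1)] (mod p ^ r)"
      using assms(2) by (intro power_cong_totient[OF _ cong_pred]) simp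
    then show "[int a ^ (k - 1) = int a ^ (k' - 1)] (mod int (p ^ r))"
      by (simp only: of_nat_power[symmetric] cong_int_iff)
    fix j
    have "[j ^ (k - 1) = j ^ (k' - 1)] (mod p ^ r)"
      using assms(4,5) by (intro power_cong_totient_prime_power[OF assms(1) cong_pred]) auto
    then show "[int j ^ (k - 1) = int j ^ (k' - 1)] (mod int (p ^ r))"
      by (simp only: of_nat_power[symmetric] cong_int_iff)
  qed (rule cong_refl)
qed

lemma padic_dvd_bernoulli_div:
  assumes "prime p" "even k" "k \<ge> 2" "\<not> p dvd k" "\<not> (p - 1) dvd k"
  shows "padic_dvd p 0 (bernoulli k / of_nat k)"
proof -
  obtain a where a: "a \<in> totatives p" "ord p a = p - 1"
    using residue_prime_has_primroot[OF assms(1)] by blast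
  then have "coprime a p"
    by (simp add: totatives_def)
  then have "padic_dvd p 1 ((of_nat a ^ k - 1) * (bernoulli k / of_nat k)
      - of_nat a ^ (k - 1) * of_int (voronoi_sum (p ^ 1) a k))"
    using assms prime_ge_5_if_not_pred_dvd_even[OF assms(1,2,5)] by (intro voronoi_congruence) auto
  from padic_dvd_mono[OF this, of 0]
  have "padic_dvd p 0 (((of_nat a ^ k - 1) * (bernoulli k / of_nat k)
      - of_nat a ^ (k - 1) * of_int (voronoi_sum (p ^ 1) a k))
      + of_int (int a ^ (k - 1) * voronoi_sum (p ^ 1) a k))"
    by (intro padic_dvd_add[OF assms(1)] padic_dvd_of_int[OF assms(1)]) simp_all
  then have "padic_dvd p 0 (of_int (int a ^ k - 1) * (bernoulli k / of_nat k))"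
    by simp
  then show ?thesis
    by (rule padic_dvd_cancel_of_int[OF assms(1) primitive_root_power_not_cong_1[OF a(2) assms(5)]])
qed

lemma not_pred_dvd_if_cong_totient:
  assumes "prime p" "r \<ge> 1" "[k = k'] (mod totient (p ^ r))" "\<not> (p - 1) dvd k"
  shows "\<not> (p - 1) dvd k'"
proof -
  have "(p - 1) dvd totient (p ^ r)"
    using assms(1,2) by (simp add: totient_prime_power)
  then have "[k = k'] (mod (p - 1))"
    by (rule cong_dvd_modulus_nat[OF assms(3)])
  then show ?thesis
    using assms(4) by (simp add: cong_dvd_iff)
qed

text \<open>Subtract the Voronoi congruences for \<open>k\<close> and \<open>k'\<close> taken at a primitive root \<open>a\<close> modulo \<open>p\<close>: their right-hand sides agree modulo \<open>p\<^sup>r\<close>, and \<open>a\<^sup>k - 1\<close> is a \<open>p\<close>-adic unit because \<open>p - 1\<close> does not divide \<open>k\<close>.\<close>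

lemma kummer_congruence:
  assumes "prime p" "r \<ge> 1"
    and "even k" "r < k" "\<not> p dvd k"
    and "even k'" "r < k'" "\<not> p dvd k'"
    and cong: "[k = k'] (mod totient (p ^ r))" and "\<not> (p - 1) dvd k"
  shows "padic_dvd p r (bernoulli k / of_nat k - bernoulli k' / of_nat k')"
proof -
  have p5: "p \<ge> 5"
    using prime_ge_5_if_not_pred_dvd_even[OF assms(1,3,10)] .
  obtain a where a: "a \<in> totatives p" "ord p a = p - 1"
    using residue_prime_has_primroot[OF assms(1)] by blast
  then have "coprime a p"
    by (simp add: totatives_def)
  define X where "X = bernoulli k / of_nat k"
  define X' where "X' = bernoulli k' / of_nat k'"
  define C where "C = (of_nat a ^ (k - 1) * of_int (voronoi_sum (p ^ r) a k) :: rat)"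
  define C' where "C' = (of_nat a ^ (k' - 1) * of_int (voronoi_sum (p ^ r) a k') :: rat)"
  have V: "padic_dvd p r ((of_nat a ^ k - 1) * X - C)"
    unfolding X_def C_def using assms(2-5) \<open>coprime a p\<close> by (intro voronoi_congruence[OF assms(1) p5]) auto
  have V': "padic_dvd p r ((of_nat a ^ k' - 1) * X' - C')"
    unfolding X'_def C'_def using assms(2,6-8) \<open>coprime a p\<close> by (intro voronoi_congruence[OF assms(1) p5]) auto
  have "int p ^ r dvd int a ^ (k - 1) * voronoi_sum (p ^ r) a k - int a ^ (k' - 1) * voronoi_sum (p ^ r) a k'"
    using voronoi_sum_cong[OF assms(1) \<open>coprime a p\<close> cong assms(4,7)] by (simp add: cong_iff_dvd_diff)
  from padic_dvd_of_int[OF assms(1) this] have CC: "padic_dvd p r (C - C')"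
    unfolding C_def C'_def by simp
  have "[a ^ k = a ^ k'] (mod p ^ r)"
    using \<open>coprime a p\<close> by (intro power_cong_totient[OF _ cong]) simp
  then have "padic_dvd p r (of_nat a ^ k - of_nat a ^ k')"
    using padic_dvd_of_int[OF assms(1), of r "int a ^ k - int a ^ k'"]
    by (simp add: cong_int_iff[symmetric] cong_iff_dvd_diff)
  moreover have "padic_dvd p 0 X'"
    unfolding X'_def using assms(6-8) not_pred_dvd_if_cong_totient[OF assms(1,2) cong assms(10)]
    by (intro padic_dvd_bernoulli_div[OF assms(1)]) auto
  ultimately have "padic_dvd p (r + 0) ((of_nat a ^ k - of_nat a ^ k') * X')"
    by (rule padic_dvd_mult[OF assms(1)])
  with padic_dvd_add[OF assms(1) padic_dvd_diff[OF assms(1) V V'] CC]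
  have "padic_dvd p r ((((of_nat a ^ k - 1) * X - C) - ((of_nat a ^ k' - 1) * X' - C'))
      + (C - C') - (of_nat a ^ k - of_nat a ^ k') * X')"
    by (intro padic_dvd_diff[OF assms(1)]) simp_all
  also have "(((of_nat a ^ k - 1) * X - C) - ((of_nat a ^ k' - 1) * X' - C')) + (C - C')
      - (of_nat a ^ k - of_nat a ^ k') * X' = of_int (int a ^ k - 1) * (X - X')"
    by (simp add: algebra_simps)
  finally show ?thesis
    unfolding X_def X'_def
    by (rule padic_dvd_cancel_of_int[OF assms(1) primitive_root_power_not_cong_1[OF a(2) assms(10)]])
qed

lemma kummer_congruence_dvd_num_iff:
  assumes "prime p" "r \<ge> 1"
    and "even k" "r < k" "\<not> p dvd k"
    and "even k'" "r < k'" "\<not> p dvd k'"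
    and "[k = k'] (mod totient (p ^ r))" "\<not> (p - 1) dvd k"
  shows "int p ^ r dvd num (bernoulli k / of_nat k) \<longleftrightarrow> int p ^ r dvd num (bernoulli k' / of_nat k')"
proof -
  have K: "padic_dvd p r (bernoulli k / of_nat k - bernoulli k' / of_nat k')"
    by (rule kummer_congruence[OF assms])
  show ?thesis
    unfolding padic_dvd_iff_dvd_num[OF assms(1,2), symmetric]
  proof
    assume "padic_dvd p r (bernoulli k / of_nat k)"
    from padic_dvd_diff[OF assms(1) this K] show "padic_dvd p r (bernoulli k' / of_nat k')"
      by simp
  next
    assume "padic_dvd p r (bernoulli k' / of_nat k')"
    from padic_dvd_add[OF assms(1) this K] show "padic_dvd p r (bernoulli k / of_nat k)"
      by simp
  qed
qed

lemma dvd_num_bernoulli_div_iff: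
  assumes "prime p" "\<not> p dvd k"
  shows "int p dvd num (bernoulli k / of_nat k) \<longleftrightarrow> int p dvd num (bernoulli k)"
proof -
  have "k \<noteq> 0"
    using assms(2) by (rule contrapos_nn) simp
  have "padic_dvd p 1 (bernoulli k / of_nat k) \<longleftrightarrow> padic_dvd p 1 (bernoulli k)"
  proof
    assume "padic_dvd p 1 (bernoulli k / of_nat k)"
    from padic_dvd_mult_of_nat[OF assms(1) this, of k] show "padic_dvd p 1 (bernoulli k)"
      using \<open>k \<noteq> 0\<close> by simp
  next
    assume "padic_dvd p 1 (bernoulli k)"
    from padic_dvd_divide_of_int[OF assms(1) _ this, of "int k"] show "padic_dvd p 1 (bernoulli k / of_nat k)"
      using assms(2) by simp
  qed
  then show ?thesis
    using padic_dvd_iff_dvd_num[OF assms(1), of 1] by simp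
qed

lemma mod_pred_even_bounds:
  fixes q m :: nat
  assumes "odd q" "q \<ge> 5" "even m" "\<not> (q - 1) dvd m"
  shows "even (m mod (q - 1))" "2 \<le> m mod (q - 1)" "m mod (q - 1) + 3 \<le> q"
proof -
  define t where "t = m mod (q - 1)"
  have "t \<noteq> 0" "t < q - 1"
    using assms(2,4) unfolding t_def by (auto simp: mod_eq_0_iff_dvd)
  moreover have "even t"
    unfolding t_def using assms(1-3) by (intro dvd_mod) auto
  ultimately have "2 \<le> t" "t + 3 \<le> q"
    using assms(1) by presburger+
  with \<open>even t\<close> show "even (m mod (q - 1))" "2 \<le> m mod (q - 1)" "m mod (q - 1) + 3 \<le> q"
    unfolding t_def by simp_all
qed

lemma irregular_pair_if_prime_dvd_num_bernoulli_div:
  assumes q: "prime q" and m: "even m" "m \<ge> 2" "\<not> q dvd m"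
    and dvd: "int q dvd num (bernoulli m / of_nat m)"
  shows "irregular_pair q (m mod (q - 1))"
proof -
  define t where "t = m mod (q - 1)"
  have "q \<noteq> 2"
    using m(1,3) by auto
  then have "odd q"
    using prime_ge_2_nat[OF q] by (intro prime_odd_nat[OF q]) simp
  have "\<not> (q - 1) dvd m"
    using not_prime_dvd_num_bernoulli_div[OF q \<open>odd q\<close> _] m(2) dvd by auto
  then have t: "even t" "2 \<le> t" "t + 3 \<le> q"
    using mod_pred_even_bounds[OF \<open>odd q\<close> prime_ge_5_if_not_pred_dvd_even[OF q m(1)] m(1)]
    unfolding t_def by blast+
  then have "\<not> q dvd t"
    by (auto dest: dvd_imp_le)
  have cong: "[m = t] (mod totient (q ^ 1))"
    using q unfolding t_def by (simp add: totient_prime cong_def)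
  have "int q ^ 1 dvd num (bernoulli t / of_nat t)"
    using kummer_congruence_dvd_num_iff[OF q _ m(1) _ m(3) t(1) _ \<open>\<not> q dvd t\<close> cong \<open>\<not> (q - 1) dvd m\<close>] dvd m(2) t(2)
    by simp
  then show ?thesis
    unfolding irregular_pair_def t_def[symmetric]
    using dvd_num_bernoulli_div_iff[OF q \<open>\<not> q dvd t\<close>] q \<open>odd q\<close> t by simp
qed

lemma prime_dvd_num_bernoulli_div_if_irregular_pair:
  assumes q: "prime q" and m: "even m" "m \<ge> 2" "\<not> q dvd m"
    and "irregular_pair q l'" "[m = l'] (mod (q - 1))"
  shows "int q dvd num (bernoulli m / of_nat m)"
proof -
  have l': "even l'" "2 \<le> l'" "l' + 3 \<le> q" "int q dvd num (bernoulli l')"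
    using assms(5) unfolding irregular_pair_def by auto
  have "\<not> q dvd l'" "\<not> (q - 1) dvd l'"
    using l'(2,3) by (auto dest: dvd_imp_le)
  moreover have "[l' = m] (mod totient (q ^ 1))"
    using assms(6) q by (simp add: totient_prime cong_sym)
  ultimately have "int q ^ 1 dvd num (bernoulli l' / of_nat l') \<longleftrightarrow> int q ^ 1 dvd num (bernoulli m / of_nat m)"
    using l'(1,2) m by (intro kummer_congruence_dvd_num_iff[OF q]) auto
  then show ?thesis
    using dvd_num_bernoulli_div_iff[OF q \<open>\<not> q dvd l'\<close>] l'(4) by simp
qed

lemma prime_dvd_num_bernoulli_div_iff:
  assumes "prime q" "even m" "m \<ge> 2" "\<not> q dvd m"
  shows "int q dvd num (bernoulli m / of_nat m) \<longleftrightarrow> (\<exists>l'. irregular_pair q l' \<and> [m = l'] (mod (q - 1)))"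
proof
  assume "int q dvd num (bernoulli m / of_nat m)"
  from irregular_pair_if_prime_dvd_num_bernoulli_div[OF assms this]
  show "\<exists>l'. irregular_pair q l' \<and> [m = l'] (mod (q - 1))"
    by (intro exI[of _ "m mod (q - 1)"] conjI) (simp_all add: cong_def)
next
  assume "\<exists>l'. irregular_pair q l' \<and> [m = l'] (mod (q - 1))"
  then show "int q dvd num (bernoulli m / of_nat m)"
    using prime_dvd_num_bernoulli_div_if_irregular_pair[OF assms] by blast
qed

section \<open>The quotient \<open>Q\<close> and the set \<open>A_set\<close>\<close>

lemma num_div_of_int:
  assumes "c > 0"
  shows "num (x / of_int c) = num x div gcd (num x) c"
proof -
  define g where "g = gcd (num x) c"
  have "g > 0"
    using assms unfolding g_def by simp
  obtain a' c' where a': "num x = g * a'" and c': "c = g * c'"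
    unfolding g_def by (meson dvd_def gcd_dvd1 gcd_dvd2)
  have "c' > 0"
    using assms c' \<open>g > 0\<close> by (simp add: zero_less_mult_iff)
  then have "den x * c' > 0"
    using den_pos[of x] by simp
  moreover have "coprime a' (den x * c')"
  proof -
    have "coprime a' c'"
      using a' c' \<open>g > 0\<close> unfolding g_def by (intro gcd_coprime) (auto simp: mult.commute)
    moreover have "coprime a' (den x)"
      using coprime_num_den[of x] a' by (metis coprime_mult_left_iff)
    ultimately show ?thesis
      by simp
  qed
  moreover have "x / of_int c = of_int a' / of_int (den x * c')"
    using \<open>g > 0\<close> den_pos[of x] by (subst num_den_eq[of x]) (simp add: a' c' field_simps)
  ultimately have "num (x / of_int c) = a'"
    by (rule num_eqI)
  moreover have "num x div g = a'"
    using a' \<open>g > 0\<close> by simp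
  ultimately show ?thesis
    unfolding g_def by simp
qed

lemma Q_eq_gcd:
  assumes "even m" "m \<ge> 2"
  shows "Q m = of_int (gcd (num (bernoulli m / of_nat m)) (int m - 1))"
proof -
  define a where "a = num (bernoulli m / of_nat m)"
  define g where "g = gcd a (int m - 1)"
  have "a \<noteq> 0"
    using bernoulli_even_neq_0[OF assms] assms(2) unfolding a_def by simp
  have "bernoulli m / (of_nat m * (of_nat m - 1)) = bernoulli m / of_nat m / of_int (int m - 1)"
    by simp
  then have "num (bernoulli m / (of_nat m * (of_nat m - 1))) = a div g"
    using assms(2) num_div_of_int[of "int m - 1" "bernoulli m / of_nat m"] unfolding a_def g_def by simp
  moreover obtain b where b: "a = g * b"
    unfolding g_def by (meson dvd_def gcd_dvd1)
  moreover have "g \<noteq> 0" "b \<noteq> 0"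
    using \<open>a \<noteq> 0\<close> b by auto
  ultimately show ?thesis
    unfolding Q_def a_def[symmetric] g_def[symmetric] by simp
qed

lemma mem_A_set_iff:
  assumes "prime p" "odd p" "r \<ge> 1" "even L" "L \<ge> 2"
  shows "m \<in> A_set p r L \<longleftrightarrow>
    (\<exists>k. m = L + k * totient (p ^ r)) \<and> gcd (num (bernoulli m / of_nat m)) (int m - 1) = int p ^ r"
proof -
  have "even (totient (p ^ r))"
  proof (rule totient_even)
    have "p ^ 1 \<le> p ^ r"
      using assms(3) prime_gt_0_nat[OF assms(1)] by (intro power_increasing) auto
    moreover have "p > 2"
      using assms(1,2) prime_ge_2_nat[of p] by (cases "p = 2") auto
    ultimately show "p ^ r > 2"
      by simp
  qed
  then have "even m \<and> m \<ge> 2" if "m = L + k * totient (p ^ r)" for k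
    using that assms(4,5) by simp
  moreover have "(of_int g = (of_nat (p ^ r) :: rat)) \<longleftrightarrow> g = int p ^ r" for g
    using of_int_eq_iff[of g "int p ^ r", where 'a = rat] by simp
  ultimately show ?thesis
    unfolding A_set_def using Q_eq_gcd by auto
qed

lemma mem_A_setD:
  assumes "prime p" "odd p" "r \<ge> 1" "even L" "L \<ge> 2" "m \<in> A_set p r L"
  shows "L \<le> m" "p ^ r dvd m - 1" "[m = L] (mod (p - 1))" "p ^ (r - 1) dvd L - 1"
proof -
  obtain k where m: "m = L + k * totient (p ^ r)"
    and g: "gcd (num (bernoulli m / of_nat m)) (int m - 1) = int p ^ r"
    using assms(6) mem_A_set_iff[OF assms(1-5)] by blast
  show "L \<le> m"
    using m by simp
  have tot: "totient (p ^ r) = p ^ (r - 1) * (p - 1)"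
    using totient_prime_power[OF assms(1)] assms(3) by simp
  have "int m - 1 = int (m - 1)"
    using m assms(5) by simp
  then have "int (p ^ r) dvd int (m - 1)"
    using gcd_dvd2[of "num (bernoulli m / of_nat m)" "int m - 1"] unfolding g by (simp only: of_nat_power)
  then show dvd: "p ^ r dvd m - 1"
    by (simp only: int_dvd_int_iff)
  have "m - 1 = (L - 1) + k * totient (p ^ r)"
    using m assms(5) by simp
  moreover have "p ^ (r - 1) dvd m - 1"
    using dvd_trans[OF le_imp_power_dvd[of "r - 1" r p] dvd] by simp
  ultimately show "p ^ (r - 1) dvd L - 1"
    by (simp add: tot dvd_add_left_iff)
  show "[m = L] (mod (p - 1))"
    by (simp add: m tot cong_def mult.assoc[symmetric])
qed

lemma Least_eq_iff_mem:
  fixes M :: "'a :: wellorder"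
  assumes "\<forall>m\<in>S. M \<le> m"
  shows "(S \<noteq> {} \<and> (LEAST m. m \<in> S) = M) \<longleftrightarrow> M \<in> S"
  using assms LeastI[of "\<lambda>m. m \<in> S"] by (auto intro: Least_equality)

lemma coprime_int_iff_prime_divisors:
  fixes a :: int and c :: nat
  assumes "c > 0"
  shows "coprime a (int c) \<longleftrightarrow> (\<forall>q. prime q \<longrightarrow> q dvd c \<longrightarrow> \<not> int q dvd a)"
proof
  assume "coprime a (int c)"
  then show "\<forall>q. prime q \<longrightarrow> q dvd c \<longrightarrow> \<not> int q dvd a"
    by (metis coprime_common_divisor int_dvd_int_iff not_prime_unit prime_nat_int_transfer)
next
  assume no_common: "\<forall>q. prime q \<longrightarrow> q dvd c \<longrightarrow> \<not> int q dvd a"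
  show "coprime a (int c)"
  proof (rule ccontr)
    assume "\<not> coprime a (int c)"
    then have "\<bar>gcd a (int c)\<bar> \<noteq> 1"
      by (simp add: coprime_iff_gcd_eq_1)
    then obtain q' where q': "prime q'" "q' dvd gcd a (int c)"
      by (rule prime_factor_int)
    then have "prime (nat q')" "nat q' dvd c" "int (nat q') dvd a"
      using prime_ge_0_int[of q'] by (auto simp: dvd_nat_abs_iff simp flip: int_dvd_int_iff)
    then show False
      using no_common by blast
  qed
qed

lemma gcd_mult_prime_power_eq_iff:
  fixes a :: int and c p r :: nat
  assumes "prime p" "int p ^ r dvd a" "c > 0" "\<not> p dvd c"
  shows "gcd a (int c * int p ^ r) = int p ^ r \<longleftrightarrow> (\<forall>q. prime q \<longrightarrow> q dvd c \<longrightarrow> \<not> int q dvd a)"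
proof -
  obtain b where b: "a = int p ^ r * b"
    using assms(2) by blast
  have "p > 0"
    using prime_gt_0_nat[OF assms(1)] .
  then have "gcd a (int c * int p ^ r) = int p ^ r \<longleftrightarrow> coprime b (int c)"
    by (simp add: b gcd_mult_left mult.commute[of "int c"] abs_mult coprime_iff_gcd_eq_1)
  also have "\<dots> \<longleftrightarrow> (\<forall>q. prime q \<longrightarrow> q dvd c \<longrightarrow> \<not> int q dvd b)"
    by (rule coprime_int_iff_prime_divisors[OF assms(3)])
  also have "\<dots> \<longleftrightarrow> (\<forall>q. prime q \<longrightarrow> q dvd c \<longrightarrow> \<not> int q dvd a)"
  proof -
    have "int q dvd a \<longleftrightarrow> int q dvd b" if "prime q" "q dvd c" for q
    proof -
      have "q \<noteq> p"
        using that(2) assms(4) by auto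
      then have "coprime (int q) (int p ^ r)"
        using that(1) assms(1) by (simp add: primes_coprime)
      then show ?thesis
        unfolding b by (rule coprime_dvd_mult_right_iff)
    qed
    then show ?thesis
      by blast
  qed
  finally show ?thesis .
qed

section \<open>Digits of irregular pairs of higher order\<close>

lemma lsum_1 [simp]: "lsum p s (Suc 0) = s (Suc 0)"
  by (simp add: lsum_def)

lemma lsum_Suc: "n \<ge> 1 \<Longrightarrow> lsum p s (Suc n) = lsum p s n + s (Suc n) * totient (p ^ n)"
  by (simp add: lsum_def sum.cl_ivl_Suc)

lemma lsum_ge_first: "n \<ge> 1 \<Longrightarrow> s 1 \<le> lsum p s n"
  by (induction n rule: dec_induct) (simp_all add: lsum_Suc)

lemma lsum_cong_first:
  assumes "prime p" "n \<ge> 1"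
  shows "[lsum p s n = s 1] (mod (p - 1))"
  using assms(2)
proof (induction n rule: dec_induct)
  case (step n)
  have "[s (Suc n) * totient (p ^ n) = 0] (mod (p - 1))"
    using assms(1) step(1) by (simp add: cong_0_iff totient_prime_power)
  from cong_add[OF step(3) this] show ?case
    by (simp add: lsum_Suc[OF step(1)])
qed simp

lemma lsum_eq_if_digits:
  assumes "prime p" "s 1 = l" "l \<ge> 1" "n \<ge> 1" "\<forall>\<nu>\<in>{2..n}. s \<nu> = l - 1"
  shows "lsum p s n = (l - 1) * p ^ (n - 1) + 1"
  using assms(4,5)
proof (induction n rule: dec_induct)
  case base
  then show ?case
    using assms(2,3) by simp
next
  case (step n)
  obtain q where q: "p = Suc q"
    using prime_gt_0_nat[OF assms(1)] gr0_implies_Suc by blast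
  obtain m where m: "n = Suc m"
    using step(1) by (cases n) auto
  have "totient (p ^ n) = p ^ m * q"
    using totient_prime_power[OF assms(1), of n] step(1) by (simp add: m q)
  then have "lsum p s (Suc n) = (l - 1) * p ^ m + 1 + (l - 1) * (p ^ m * q)"
    using step by (simp add: lsum_Suc m)
  also have "\<dots> = (l - 1) * p ^ n + 1"
    by (simp add: m q algebra_simps)
  finally show ?case
    by simp
qed

lemma digit_eq_if_dvd:
  fixes p c t :: nat
  assumes "c < p" "t < p" "p dvd c + t * (p - 1)"
  shows "t = c"
proof -
  have "int (c + t * (p - 1)) = int c + int t * (int p - 1)"
    using assms(1) by (simp add: of_nat_diff)
  moreover have "int p dvd int (c + t * (p - 1))"
    using assms(3) by (simp only: int_dvd_int_iff)
  ultimately have "int p dvd int c + int t * (int p - 1)"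
    by (simp only:)
  then have "int p dvd (int c + int t * (int p - 1)) - int t * int p"
    by (rule dvd_diff) simp
  then have "int p dvd int c - int t"
    by (simp add: algebra_simps)
  moreover have "\<bar>int c - int t\<bar> < int p"
    using assms(1,2) by linarith
  ultimately have "int c - int t = 0"
    using dvd_imp_le_int[of "int c - int t" "int p"] by fastforce
  then show ?thesis
    by simp
qed

lemma digits_if_dvd_lsum:
  assumes "prime p" "s 1 = l" "1 \<le> l" "l \<le> p" "n \<ge> 1" "\<forall>\<nu>\<in>{2..n}. s \<nu> < p"
    and "p ^ (n - 1) dvd lsum p s n - 1"
  shows "\<forall>\<nu>\<in>{2..n}. s \<nu> = l - 1"
  using assms(5-7)
proof (induction n rule: dec_induct)
  case (step n)
  define t where "t = s (Suc n)"
  obtain m where m: "n = Suc m"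
    using step(1) by (cases n) auto
  have tot: "totient (p ^ n) = p ^ m * (p - 1)"
    using totient_prime_power[OF assms(1), of n] step(1) by (simp add: m)
  have "lsum p s n \<ge> 1"
    using lsum_ge_first[OF step(1), where p = p and s = s] assms(2,3) by simp
  then have pred: "lsum p s (Suc n) - 1 = (lsum p s n - 1) + t * (p ^ m * (p - 1))"
    by (simp add: lsum_Suc[OF step(1)] tot t_def)
  have "p * p ^ m dvd lsum p s (Suc n) - 1"
    using step.prems(2) by (simp add: m)
  then have "p ^ m dvd lsum p s (Suc n) - 1"
    by (rule dvd_mult_right)
  then have "p ^ m dvd lsum p s n - 1"
    unfolding pred by (simp add: dvd_add_left_iff)
  then have digits: "\<forall>\<nu>\<in>{2..n}. s \<nu> = l - 1"
    using step by (simp add: m)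
  then have "lsum p s (Suc n) - 1 = p ^ m * ((l - 1) + t * (p - 1))"
    unfolding pred using lsum_eq_if_digits[OF assms(1-3) step(1) digits] by (simp add: m algebra_simps)
  moreover have "p ^ m * p dvd lsum p s (Suc n) - 1"
    using step.prems(2) by (simp add: m mult.commute)
  ultimately have "p dvd (l - 1) + t * (p - 1)"
    using prime_gt_0_nat[OF assms(1)] by simp
  then have "t = l - 1"
    using step(1) step.prems(1) assms(3,4) by (intro digit_eq_if_dvd) (auto simp: t_def)
  then show ?case
    using digits by (auto simp: t_def le_Suc_eq)
qed simp

lemma cong_self_pred: "(p::nat) \<ge> 1 \<Longrightarrow> [p = 1] (mod (p - 1))"
  by (simp add: cong_altdef_nat)

lemma cong_dvd_pred_imp_le:
  fixes p l m r :: nat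
  assumes "1 \<le> l" "l < p" "[m = l] (mod (p - 1))" "p ^ r dvd m - 1" "m \<ge> 1"
  shows "(l - 1) * p ^ r + 1 \<le> m"
proof -
  obtain t where t: "m = p ^ r * t + 1"
    using assms(4,5) by (metis dvdE le_add_diff_inverse2)
  have "[p = 1] (mod (p - 1))"
    using assms(2) by (intro cong_self_pred) simp
  then have "[p ^ r * t + 1 = 1 ^ r * t + 1] (mod (p - 1))"
    by (intro cong_add cong_mult cong_pow cong_refl)
  then have "[t + 1 = m] (mod (p - 1))"
    using t by (simp add: cong_sym)
  then have "[t + 1 = (l - 1) + 1] (mod (p - 1))"
    using cong_trans[OF _ assms(3)] assms(1) by simp
  then have "[t = l - 1] (mod (p - 1))"
    by (simp only: cong_add_rcancel_nat)
  then have "t mod (p - 1) = l - 1"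
    using assms(1,2) by (simp add: cong_def)
  then have "l - 1 \<le> t"
    by (metis mod_less_eq_dividend)
  then show ?thesis
    using t by (simp add: mult.commute)
qed

lemma not_dvd_plus_1: "(q::nat) \<noteq> 1 \<Longrightarrow> q dvd a \<Longrightarrow> \<not> q dvd a + 1"
  using dvd_add_right_iff[of q a 1] by simp

lemma mult_prime_power_add_totient:
  assumes "prime p" "r \<ge> 1"
  shows "c * p ^ r + 1 = (c * p ^ (r - 1) + 1) + c * totient (p ^ r)"
proof -
  obtain q where q: "p = Suc q"
    using prime_gt_0_nat[OF assms(1)] by (cases p) auto
  obtain r' where r': "r = Suc r'"
    using assms(2) by (cases r) auto
  show ?thesis
    using totient_prime_power[OF assms(1), of r] by (simp add: q r' algebra_simps)
qed

lemma digit_pattern: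
  fixes p l n :: nat
  assumes "prime p" "odd p" "even l" "2 \<le> l" "l + 1 < p"
  shows "even ((l - 1) * p ^ n + 1)" "2 \<le> (l - 1) * p ^ n + 1" "n < (l - 1) * p ^ n"
    and "\<not> p dvd (l - 1) * p ^ n + 1" "[(l - 1) * p ^ n + 1 = l] (mod (p - 1))"
proof -
  show "even ((l - 1) * p ^ n + 1)"
    using assms(2-4) by simp
  have "n < 2 ^ n"
    by (rule less_exp)
  also have "\<dots> \<le> p ^ n"
    using prime_ge_2_nat[OF assms(1)] by (simp add: power_mono)
  also have "\<dots> \<le> (l - 1) * p ^ n"
    using mult_le_mono1[of 1 "l - 1" "p ^ n"] assms(4) by linarith
  finally show "n < (l - 1) * p ^ n" .
  then show "2 \<le> (l - 1) * p ^ n + 1"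
    by linarith
  show "\<not> p dvd (l - 1) * p ^ n + 1"
  proof (cases n)
    case 0
    then show ?thesis
      using assms(4,5) by (auto dest: dvd_imp_le)
  next
    case (Suc m)
    then have "p dvd (l - 1) * p ^ n"
      by simp
    then show ?thesis
      using assms(1) by (intro not_dvd_plus_1) auto
  qed
  have "[p ^ n = 1 ^ n] (mod (p - 1))"
    using prime_gt_0_nat[OF assms(1)] by (intro cong_pow cong_self_pred) simp
  then have "[(l - 1) * p ^ n + 1 = (l - 1) * 1 + 1] (mod (p - 1))"
    by (intro cong_add cong_mult cong_refl) simp
  then show "[(l - 1) * p ^ n + 1 = l] (mod (p - 1))"
    using assms(4) by simp
qed

lemma prime_power_dvd_num_bernoulli_digit_pattern:
  fixes p l r :: nat
  defines "L \<equiv> (l - 1) * p ^ (r - 1) + 1" and "M \<equiv> (l - 1) * p ^ r + 1"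
  assumes p: "prime p" "odd p" and r: "r \<ge> 1" and l: "even l" "2 \<le> l" "l + 1 < p"
    and dvd: "int p ^ r dvd num (bernoulli L / of_nat L)"
  shows "int p ^ r dvd num (bernoulli M / of_nat M)"
proof -
  note L = digit_pattern[OF p l, of "r - 1", folded L_def]
  note M = digit_pattern[OF p l, of r, folded M_def]
  have "\<not> (p - 1) dvd L"
    using L(5) l by (auto simp: cong_def mod_eq_0_iff_dvd[symmetric])
  have "[L = M] (mod totient (p ^ r))"
    unfolding L_def M_def mult_prime_power_add_totient[OF p(1) r] by (simp add: cong_def)
  then show ?thesis
    using kummer_congruence_dvd_num_iff[OF p(1) r L(1) _ L(4) M(1) _ M(4) _ \<open>\<not> (p - 1) dvd L\<close>] L(3) M(3) r dvd
    unfolding L_def M_def by simp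
qed

lemma mem_A_set_digit_pattern_iff:
  fixes p l r :: nat
  defines "M \<equiv> (l - 1) * p ^ r + 1"
  assumes p: "prime p" "odd p" and r: "r \<ge> 1" and l: "even l" "2 \<le> l" "l + 1 < p"
    and dvd: "int p ^ r dvd num (bernoulli ((l - 1) * p ^ (r - 1) + 1) / of_nat ((l - 1) * p ^ (r - 1) + 1))"
  shows "M \<in> A_set p r ((l - 1) * p ^ (r - 1) + 1) \<longleftrightarrow>
    (\<forall>q. prime q \<longrightarrow> q dvd l - 1 \<longrightarrow> \<not> int q dvd num (bernoulli M / of_nat M))"
proof -
  have "M = ((l - 1) * p ^ (r - 1) + 1) + (l - 1) * totient (p ^ r)"
    unfolding M_def by (rule mult_prime_power_add_totient[OF p(1) r])
  then have "M \<in> A_set p r ((l - 1) * p ^ (r - 1) + 1) \<longleftrightarrow>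
      gcd (num (bernoulli M / of_nat M)) (int M - 1) = int p ^ r"
    using mem_A_set_iff[OF p r digit_pattern(1,2)[OF p l, of "r - 1"], of M] by blast
  also have "int M - 1 = int (l - 1) * int p ^ r"
    unfolding M_def by simp
  also have "gcd (num (bernoulli M / of_nat M)) (int (l - 1) * int p ^ r) = int p ^ r \<longleftrightarrow>
      (\<forall>q. prime q \<longrightarrow> q dvd l - 1 \<longrightarrow> \<not> int q dvd num (bernoulli M / of_nat M))"
    using prime_power_dvd_num_bernoulli_digit_pattern[OF p r l dvd, folded M_def] l
    by (intro gcd_mult_prime_power_eq_iff[OF p(1)]) (auto dest: dvd_imp_le)
  finally show ?thesis .
qed

lemma prime_dvd_num_bernoulli_digit_pattern_iff:
  fixes p l r q :: nat
  defines "M \<equiv> (l - 1) * p ^ r + 1"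
  assumes "prime q" "q dvd l - 1" "even M"
  shows "int q dvd num (bernoulli M / of_nat M) \<longleftrightarrow>
    (\<exists>l'. irregular_pair q l' \<and> [(l - 1) * p ^ r = l' - 1] (mod (q - 1)))"
proof -
  have "M \<ge> 2"
    using assms(4) unfolding M_def by presburger
  have "q dvd (l - 1) * p ^ r"
    using assms(3) by simp
  then have "\<not> q dvd M"
    unfolding M_def using assms(2) by (intro not_dvd_plus_1) auto
  moreover note \<open>M \<ge> 2\<close>
  moreover have "[M = l'] (mod (q - 1)) \<longleftrightarrow> [(l - 1) * p ^ r = l' - 1] (mod (q - 1))"
    if "irregular_pair q l'" for l'
  proof -
    have "l' = (l' - 1) + 1"
      using that by (simp add: irregular_pair_def)
    then show ?thesis
      unfolding M_def by (metis cong_add_rcancel_nat)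
  qed
  ultimately show ?thesis
    using prime_dvd_num_bernoulli_div_iff[OF assms(2) assms(4)] by blast
qed

lemma irregular_prime_if_irregular_pair: "irregular_pair q l \<Longrightarrow> irregular_prime q"
  unfolding irregular_prime_def irregular_pair_def by blast

locale irregular_pair_of_order =
  fixes p l r :: nat and s :: "nat \<Rightarrow> nat"
  assumes r: "r \<ge> 1" and irr: "irregular_pair p l" and s1: "s 1 = l"
    and digits: "\<forall>\<nu>\<in>{1..r}. s \<nu> < p" and order: "(p, lsum p s r) \<in> psi_irr r"
begin

lemma p: "prime p" "odd p" and l: "even l" "2 \<le> l" "l + 1 < p"
  using irr unfolding irregular_pair_def by auto

lemma lsum_r: "even (lsum p s r)" "lsum p s r \<ge> 2" "int p ^ r dvd num (bernoulli (lsum p s r) / of_nat (lsum p s r))"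
  using order lsum_ge_first[OF r, of s p] s1 l(2) unfolding psi_irr_def by auto

lemma A_set_lower_bound:
  assumes "m \<in> A_set p r (lsum p s r)"
  shows "(l - 1) * p ^ r + 1 \<le> m"
proof (rule cong_dvd_pred_imp_le)
  show "[m = l] (mod (p - 1))"
    using mem_A_setD(3)[OF p r lsum_r(1,2) assms] lsum_cong_first[OF p(1) r, of s] s1 by (auto intro: cong_trans)
  show "p ^ r dvd m - 1" "m \<ge> 1"
    using mem_A_setD(1,2)[OF p r lsum_r(1,2) assms] lsum_r(2) by auto
qed (use l in auto)

lemma digits_if_A_set_nonempty: "A_set p r (lsum p s r) \<noteq> {} \<Longrightarrow> \<forall>\<nu>\<in>{2..r}. s \<nu> = l - 1"
  using mem_A_setD(4)[OF p r lsum_r(1,2)] p(1) s1 l digits r by (intro digits_if_dvd_lsum[of p s l]) auto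

lemma lsum_if_digits: "\<forall>\<nu>\<in>{2..r}. s \<nu> = l - 1 \<Longrightarrow> lsum p s r = (l - 1) * p ^ (r - 1) + 1"
  using p(1) s1 l(2) r by (intro lsum_eq_if_digits[of p s l]) auto

lemma pred_lsum_mult_if_digits:
  "\<forall>\<nu>\<in>{2..r}. s \<nu> = l - 1 \<Longrightarrow> (lsum p s r - 1) * p + 1 = (l - 1) * p ^ r + 1"
  using lsum_if_digits r by (simp add: power_eq_if mult_ac)

lemma A_eq_iff:
  assumes "\<forall>\<nu>\<in>{2..r}. s \<nu> = l - 1"
  shows "(A_set p r (lsum p s r) \<noteq> {} \<and> A p r (lsum p s r) = (l - 1) * p ^ r + 1) \<longleftrightarrow>
    (\<forall>q. prime q \<longrightarrow> q dvd l - 1 \<longrightarrow>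
      \<not> (\<exists>l'. irregular_pair q l' \<and> [(l - 1) * p ^ r = l' - 1] (mod (q - 1))))"
proof -
  have "(A_set p r (lsum p s r) \<noteq> {} \<and> A p r (lsum p s r) = (l - 1) * p ^ r + 1) \<longleftrightarrow>
      (l - 1) * p ^ r + 1 \<in> A_set p r (lsum p s r)"
    unfolding A_def using A_set_lower_bound by (intro Least_eq_iff_mem) blast
  also have "\<dots> \<longleftrightarrow> (\<forall>q. prime q \<longrightarrow> q dvd l - 1 \<longrightarrow>
      \<not> int q dvd num (bernoulli ((l - 1) * p ^ r + 1) / of_nat ((l - 1) * p ^ r + 1)))"
    using lsum_r(3) unfolding lsum_if_digits[OF assms] by (intro mem_A_set_digit_pattern_iff p r l)
  also have "\<dots> \<longleftrightarrow> (\<forall>q. prime q \<longrightarrow> q dvd l - 1 \<longrightarrow>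
      \<not> (\<exists>l'. irregular_pair q l' \<and> [(l - 1) * p ^ r = l' - 1] (mod (q - 1))))"
    using prime_dvd_num_bernoulli_digit_pattern_iff[OF _ _ digit_pattern(1)[OF p l]] by blast
  finally show ?thesis .
qed

end

theorem theorem3p3:
  fixes p l r :: nat and s :: "nat \<Rightarrow> nat"
  assumes r: "r \<ge> 1"
    and irr: "irregular_pair p l"
    and Delta: "Delta p l \<noteq> 0"
    and s1: "s 1 = l"
    and digits: "\<forall>\<nu>\<in>{1..r}. s \<nu> < p"
    and order: "\<forall>n\<in>{1..r}. (p, lsum p s n) \<in> psi_irr n"
  shows
    "(A_set p r (lsum p s r) \<noteq> {} \<longrightarrow>
        (\<forall>\<nu>\<in>{2..r}. s \<nu> = l - 1) \<and> lsum p s r - 1 = (l - 1) * p ^ (r - 1))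
     \<and> (\<forall>m\<in>A_set p r (lsum p s r). (l - 1) * p ^ r + 1 \<le> m)
     \<and> ((\<forall>\<nu>\<in>{2..r}. s \<nu> = l - 1) \<longrightarrow>
        ((A_set p r (lsum p s r) \<noteq> {}
          \<and> A p r (lsum p s r) = (lsum p s r - 1) * p + 1
          \<and> A p r (lsum p s r) = (l - 1) * p ^ r + 1)
         \<longleftrightarrow>
         ((\<not> (\<exists>q. prime q \<and> q dvd (l - 1) \<and> irregular_prime q))
          \<or> (\<forall>q. prime q \<and> q dvd (l - 1) \<and> irregular_prime q \<longrightarrow>
               (\<forall>l'. irregular_pair q l' \<longrightarrow>
                  \<not> [(l - 1) * p ^ r = l' - 1] (mod (q - 1)))))))"
proof -
  interpret irregular_pair_of_order p l r s
    using assms by unfold_locales auto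
  have "A_set p r (lsum p s r) \<noteq> {} \<longrightarrow>
      (\<forall>\<nu>\<in>{2..r}. s \<nu> = l - 1) \<and> lsum p s r - 1 = (l - 1) * p ^ (r - 1)"
    using digits_if_A_set_nonempty lsum_if_digits by auto
  moreover have "(\<forall>\<nu>\<in>{2..r}. s \<nu> = l - 1) \<longrightarrow>
      ((A_set p r (lsum p s r) \<noteq> {}
        \<and> A p r (lsum p s r) = (lsum p s r - 1) * p + 1 \<and> A p r (lsum p s r) = (l - 1) * p ^ r + 1)
       \<longleftrightarrow>
       ((\<not> (\<exists>q. prime q \<and> q dvd (l - 1) \<and> irregular_prime q))
        \<or> (\<forall>q. prime q \<and> q dvd (l - 1) \<and> irregular_prime q \<longrightarrow>
             (\<forall>l'. irregular_pair q l' \<longrightarrow> \<not> [(l - 1) * p ^ r = l' - 1] (mod (q - 1))))))"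
    using A_eq_iff pred_lsum_mult_if_digits irregular_prime_if_irregular_pair by auto
  ultimately show ?thesis
    using A_set_lower_bound by blast
qed

end
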